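(* Let $k,l\in\mathbb{N}$, fix norms $\|\cdot\|$ on $\mathbb{R}^k$ and $\mathbb{R}^l$, and identify $\mathbb{E}^{k+l} = [-\infty,\infty]^{k+l}\setminus\{0\}$ with $([-\infty,\infty]^k\times[-\infty,\infty]^l)\setminus\{(0,0)\}$. Every Radon measure $\mu$ on $\mathbb{E}^{k+l}$ is uniquely determined by the values $\mu(f)=\int f\,d\mu$ for $f$ ranging over $\mathcal{F}_1\cup\mathcal{F}_2$, where \[ \mathcal{F}_1 = \{f\in C_K(\mathbb{E}^{k+l}) \mid \exists u\in(0,\infty): \|y_1\|\le u \Rightarrow f(y_1,y_2)=0\}, \] \[ \mathcal{F}_2 = \{f\in C_K(\mathbb{E}^{k+l}) \mid f(y_1,y_2)=f(0,y_2) \text{ for all } (y_1,y_2)\}. \]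
   Context: A subset of $\mathbb{E}^{k+l}$ is compact iff it is closed in $[-\infty,\infty]^{k+l}$ and does not contain the origin; a Radon measure on $\mathbb{E}^{k+l}$ is a Borel measure finite on compact sets. $C_K(\mathbb{E}^{k+l})$ denotes the continuous real functions with compact support in $\mathbb{E}^{k+l}$. Here $y_1\in[-\infty,\infty]^k$, $y_2\in[-\infty,\infty]^l$ (with the norm extended as $+\infty$ at infinite points). *)

theory Defs
  imports "HOL-Analysis.Analysis" "HOL-Library.Extended_Real"
begin

type_synonym ('k,'l) pt = "(ereal ^ 'k) \<times> (ereal ^ 'l)"

definition Espace :: "('k::finite,'l::finite) pt set" where
  "Espace = UNIV - {(0, 0)}"

definition is_norm :: "(real ^ 'k::finite \<Rightarrow> real) \<Rightarrow> bool" where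
  "is_norm N \<longleftrightarrow> (\<forall>x. N x = 0 \<longleftrightarrow> x = 0) \<and> (\<forall>x y. N (x + y) \<le> N x + N y)
     \<and> (\<forall>c x. N (c *\<^sub>R x) = \<bar>c\<bar> * N x)"

definition ext_norm :: "(real ^ 'k::finite \<Rightarrow> real) \<Rightarrow> ereal ^ 'k \<Rightarrow> ereal" where
  "ext_norm N y = (if (\<forall>i. \<bar>y $ i\<bar> \<noteq> \<infinity>) then ereal (N (\<chi> i. real_of_ereal (y $ i))) else \<infinity>)"

text \<open>Compact subsets of E: closed in [-inf,inf]^(k+l) and not containing the origin.\<close>
definition E_compact :: "('k::finite,'l::finite) pt set \<Rightarrow> bool" where
  "E_compact K \<longleftrightarrow> closed K \<and> (0, 0) \<notin> K"

definition radon :: "('k::finite,'l::finite) pt measure \<Rightarrow> bool" where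
  "radon M \<longleftrightarrow> space M = Espace \<and> sets M = sets (restrict_space borel Espace)
     \<and> (\<forall>K. E_compact K \<longrightarrow> emeasure M K < \<infinity>)"

text \<open>C_K(E): continuous real functions on E with compact support in E
  (represented as functions on the whole cube, set to 0 at the origin).\<close>
definition CK :: "(('k::finite,'l::finite) pt \<Rightarrow> real) set" where
  "CK = {f. continuous_on Espace f \<and> (\<exists>K. E_compact K \<and> (\<forall>x\<in>Espace - K. f x = 0))
            \<and> (\<forall>x. x \<notin> Espace \<longrightarrow> f x = 0)}"

definition F1 :: "(real ^ 'k::finite \<Rightarrow> real) \<Rightarrow> (('k,'l::finite) pt \<Rightarrow> real) set" where
  "F1 N = {f \<in> CK. \<exists>u::real. 0 < u \<and>
             (\<forall>y1 y2. ext_norm N y1 \<le> ereal u \<longrightarrow> f (y1, y2) = 0)}"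

definition F2 :: "(('k::finite,'l::finite) pt \<Rightarrow> real) set" where
  "F2 = {f \<in> CK. \<forall>y1 y2. f (y1, y2) = f (0, y2)}"

end

theory Submission
  imports Defs
begin

text \<open>
  Squashing every coordinate by \<open>t \<mapsto> t / (1 + \<bar>t\<bar>)\<close> embeds the compact cube
  \<open>[-\<infinity>,\<infinity>]\<^sup>k\<^sup>+\<^sup>l\<close> homeomorphically into \<open>\<real>\<^sup>k\<^sup>+\<^sup>l\<close>, so distance functions are available.
  With them the indicator of a compact \<open>K \<subseteq> E\<close> is a dominated limit of functions in
  \<open>C\<^sub>K(E)\<close>, and compact sets form an intersection-stable generator of the Borel sets of \<open>E\<close>
  that exhausts \<open>E\<close> by sets of finite measure; hence it suffices that all \<open>f \<in> C\<^sub>K(E)\<close> have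
  the same integrals. Writing \<open>A = {y\<^sub>1 \<noteq> 0}\<close> and \<open>h(y\<^sub>1,y\<^sub>2) = f(0,y\<^sub>2) \<in> F\<^sub>2\<close>, we have
  \<open>f = f 1\<^sub>A + h - h 1\<^sub>A\<close>, and \<open>g 1\<^sub>A\<close> is the dominated limit of \<open>g \<psi>\<^sub>n\<close> for cutoffs \<open>\<psi>\<^sub>n\<close>
  vanishing near \<open>{y\<^sub>1 = 0}\<close>; these products lie in \<open>F\<^sub>1\<close> because all norms on \<open>\<real>\<^sup>k\<close> are
  equivalent.
\<close>

lemma compact_UNIV_vec_ereal: "compact (UNIV :: (ereal ^ 'k::finite) set)"
proof -
  have "compact_space (euclidean::ereal topology)"
    by (simp add: compact_space_def compact_UNIV)
  then have "compact_space (product_topology (\<lambda>i. euclidean::ereal topology) (UNIV::'k set))"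
    by (simp add: compact_space_product_topology)
  then have "compact (UNIV :: ('k \<Rightarrow> ereal) set)"
    by (simp add: euclidean_product_topology compact_space_def del: compactin_euclidean_iff) simp
  moreover have "continuous_on UNIV (\<lambda>f::'k \<Rightarrow> ereal. \<chi> i. f i)"
    by (intro continuous_on_vec_lambda continuous_on_product_coordinates)
  moreover have "range (\<lambda>f::'k \<Rightarrow> ereal. \<chi> i. f i) = UNIV"
    by (metis surj_def vec_lambda_eta)
  ultimately show ?thesis
    by (metis compact_continuous_image)
qed

lemma compact_UNIV_pt: "compact (UNIV :: ('k::finite,'l::finite) pt set)"
  using compact_Times[OF compact_UNIV_vec_ereal compact_UNIV_vec_ereal] by simp

lemma closed_imp_compact_pt: "closed (K :: ('k::finite,'l::finite) pt set) \<Longrightarrow> compact K"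
  using closed_Int_compact[OF _ compact_UNIV_pt] by simp

definition squash :: "ereal \<Rightarrow> real" where
  "squash x = real_of_ereal (inverse (max 0 (-x) + 1)) - real_of_ereal (inverse (max 0 x + 1))"

lemma squash_ereal: "squash (ereal r) = r / (1 + \<bar>r\<bar>)"
  by (cases "r \<ge> 0") (auto simp: squash_def max_def field_simps)

lemma squash_infinity [simp]: "squash \<infinity> = 1" "squash (-\<infinity>) = -1"
  by (auto simp: squash_def)

lemma squash_zero [simp]: "squash 0 = 0"
  using squash_ereal[of 0] by (simp add: zero_ereal_def)

lemma abs_squash_ereal_less: "\<bar>squash (ereal r)\<bar> < 1"
  by (simp add: squash_ereal abs_div divide_less_eq)

lemma abs_squash_ereal_le: "\<bar>squash (ereal r)\<bar> \<le> \<bar>r\<bar>"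
  by (simp add: squash_ereal abs_div divide_le_eq mult_le_cancel_left1)

lemma continuous_on_squash: "continuous_on UNIV squash"
proof -
  have "continuous_on UNIV (\<lambda>x::ereal. real_of_ereal (inverse (max 0 x + 1)))"
  proof -
    have "continuous_on UNIV (\<lambda>x::ereal. max 0 x + 1)"
      unfolding continuous_on_def
      by (auto intro!: tendsto_add_ereal_general1 tendsto_max tendsto_ident_at)
    then have "continuous_on UNIV (\<lambda>x::ereal. inverse (max 0 x + 1))"
      by (rule continuous_on_compose2[OF continuous_on_inverse_ereal]) auto
    moreover have "\<bar>inverse (max 0 x + 1)\<bar> \<noteq> \<infinity>" for x :: ereal
      by (cases x) (auto simp: max_def)
    ultimately show ?thesis
      using continuous_on_iff_real[of UNIV "\<lambda>x::ereal. inverse (max 0 x + 1)"]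
      by (simp add: comp_def)
  qed
  then show ?thesis
    unfolding squash_def
    by (intro continuous_on_diff continuous_on_compose2[OF \<open>continuous_on UNIV _\<close>]
        continuous_intros) auto
qed

lemma strict_mono_squash: "strict_mono squash"
proof (rule strict_monoI)
  have real_case: "r / (1 + \<bar>r\<bar>) < s / (1 + \<bar>s\<bar>)" if "r < s" for r s :: real
  proof (cases "0 \<le> r"; cases "0 \<le> s")
    assume "\<not> 0 \<le> r" "0 \<le> s"
    then show ?thesis by (smt (verit) divide_neg_pos divide_nonneg_pos)
  qed (use that in \<open>auto simp: field_simps\<close>)
  fix x y :: ereal
  assume "x < y"
  then show "squash x < squash y"
    using abs_squash_ereal_less
    by (cases x; cases y)
      (auto simp: abs_less_iff simp del: squash_ereal, simp add: squash_ereal real_case)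
qed

lemma squash_eq_iff: "squash x = squash y \<longleftrightarrow> x = y"
  using strict_mono_imp_inj_on[OF strict_mono_squash] by (auto dest: injD)

lemma squash_eq_0_iff: "squash x = 0 \<longleftrightarrow> x = 0"
  using squash_eq_iff[of x 0] by simp

definition embed :: "('k::finite,'l::finite) pt \<Rightarrow> (real ^ 'k) \<times> (real ^ 'l)" where
  "embed p = ((\<chi> i. squash (fst p $ i)), (\<chi> j. squash (snd p $ j)))"

lemma continuous_on_embed: "continuous_on UNIV embed"
  unfolding embed_def
  by (intro continuous_on_Pair continuous_on_vec_lambda
       continuous_on_compose2[OF continuous_on_squash] continuous_intros) auto

lemma inj_embed: "inj embed"
  by (auto intro!: injI simp: embed_def prod_eq_iff vec_eq_iff squash_eq_iff)

lemma fst_embed_eq_0_iff: "fst (embed x) = 0 \<longleftrightarrow> fst x = 0"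
  by (simp add: embed_def vec_eq_iff squash_eq_0_iff)

lemma embed_eq_0_iff: "embed x = 0 \<longleftrightarrow> x = (0, 0)"
  by (simp add: embed_def vec_eq_iff prod_eq_iff squash_eq_0_iff)

lemma closed_embed_image: "closed K \<Longrightarrow> closed (embed ` K)"
  by (metis closed_imp_compact_pt compact_imp_closed compact_continuous_image
      continuous_on_subset continuous_on_embed subset_UNIV)

lemma is_normD:
  assumes "is_norm N"
  shows is_norm_eq_0_iff: "N x = 0 \<longleftrightarrow> x = 0"
    and is_norm_triangle: "N (x + y) \<le> N x + N y"
    and is_norm_scaleR: "N (c *\<^sub>R x) = \<bar>c\<bar> * N x"
  using assms by (simp_all add: is_norm_def)

lemma is_norm_nonneg:
  assumes "is_norm N" shows "0 \<le> N x"
proof -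
  have "0 = N (x + (-1) *\<^sub>R x)"
    using is_norm_eq_0_iff[OF assms] by simp
  also have "\<dots> \<le> N x + N ((-1) *\<^sub>R x)"
    by (rule is_norm_triangle[OF assms])
  also have "\<dots> = 2 * N x"
    using is_norm_scaleR[OF assms, of "-1" x] by simp
  finally show ?thesis by simp
qed

lemma is_norm_continuous:
  assumes "is_norm N" shows "continuous_on UNIV N"
proof (rule convex_on_continuous)
  show "convex_on UNIV N"
  proof (rule convex_onI)
    fix t :: real and x y
    assume "0 < t" "t < 1"
    have "N ((1 - t) *\<^sub>R x + t *\<^sub>R y) \<le> N ((1 - t) *\<^sub>R x) + N (t *\<^sub>R y)"
      by (rule is_norm_triangle[OF assms])
    also have "\<dots> = (1 - t) * N x + t * N y"
      using \<open>0 < t\<close> \<open>t < 1\<close> by (simp add: is_norm_scaleR[OF assms])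
    finally show "N ((1 - t) *\<^sub>R x + t *\<^sub>R y) \<le> (1 - t) * N x + t * N y" .
  qed simp
qed simp

text \<open>\<open>N\<close> attains a positive minimum on the Euclidean unit sphere.\<close>

lemma is_norm_lower_bound:
  fixes N :: "real ^ 'k::finite \<Rightarrow> real"
  assumes N: "is_norm N"
  obtains c where "c > 0" "\<And>x. c * norm x \<le> N x"
proof -
  have "sphere (0::real^'k) 1 \<noteq> {}"
    by (metis norm_axis_1 mem_sphere_0 empty_iff)
  then obtain z where z: "z \<in> sphere 0 1" and min: "\<And>y. y \<in> sphere 0 1 \<Longrightarrow> N z \<le> N y"
    using continuous_attains_inf[OF compact_sphere _ continuous_on_subset[OF is_norm_continuous[OF N]]]
    by blast
  have "N z > 0"
    using z is_norm_nonneg[OF N] is_norm_eq_0_iff[OF N] by (auto simp: less_le)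
  moreover have "N z * norm x \<le> N x" for x
  proof (cases "x = 0")
    case False
    then have "N z \<le> N (inverse (norm x) *\<^sub>R x)"
      by (intro min) simp
    also have "\<dots> = N x / norm x"
      by (simp add: is_norm_scaleR[OF N] field_simps)
    finally show ?thesis
      using False by (simp add: le_divide_eq mult.commute)
  qed (simp add: is_norm_nonneg[OF N])
  ultimately show ?thesis by (rule that)
qed

lemma norm_squash_le_ext_norm:
  fixes N :: "real ^ 'k::finite \<Rightarrow> real"
  assumes "0 \<le> c" and c: "\<And>x. c * norm x \<le> N x" and le: "ext_norm N y \<le> ereal u"
  shows "c * norm (\<chi> i. squash (y $ i)) \<le> u"
proof -
  define x where "x = (\<chi> i. real_of_ereal (y $ i))"
  have finite: "\<forall>i. \<bar>y $ i\<bar> \<noteq> \<infinity>"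
    using le by (auto simp: ext_norm_def split: if_splits)
  then have "y $ i = ereal (x $ i)" for i
    by (simp add: x_def ereal_real')
  then have "norm (\<chi> i. squash (y $ i)) \<le> norm x"
    by (intro norm_le_componentwise_cart) (simp add: abs_squash_ereal_le)
  then have "c * norm (\<chi> i. squash (y $ i)) \<le> c * norm x"
    using \<open>0 \<le> c\<close> by (rule mult_left_mono)
  also have "\<dots> \<le> N x" by (rule c)
  also have "\<dots> \<le> u"
    using le finite by (simp add: ext_norm_def x_def)
  finally show ?thesis .
qed

lemma closed_zero_vec_ereal: "closed {0 :: ereal ^ 'k::finite}"
proof -
  have "{0 :: ereal ^ 'k} = {x. \<forall>i. x $ i \<in> {0}}"
    by (auto simp: vec_eq_iff)
  then show ?thesis
    using closed_vector_box[of "\<lambda>_. {0::ereal}"] by simp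
qed

lemma open_Espace: "open (Espace :: ('k::finite,'l::finite) pt set)"
proof -
  have "Espace = - ({0} \<times> {0} :: ('k,'l) pt set)"
    by (auto simp: Espace_def)
  then show ?thesis
    by (metis open_Compl closed_Times closed_zero_vec_ereal)
qed

lemma sets_radon_iff: "radon M \<Longrightarrow> A \<in> sets M \<longleftrightarrow> A \<subseteq> Espace \<and> A \<in> sets borel"
  using sets_restrict_space_iff[of Espace borel A] borel_open[OF open_Espace] by (simp add: radon_def)

lemma E_compact_subset_Espace: "E_compact K \<Longrightarrow> K \<subseteq> Espace"
  by (auto simp: E_compact_def Espace_def)

lemma E_compact_in_sets_radon: "radon M \<Longrightarrow> E_compact K \<Longrightarrow> K \<in> sets M"
  by (simp add: sets_radon_iff E_compact_subset_Espace) (simp add: E_compact_def)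

lemma CK_E:
  assumes "f \<in> CK"
  obtains K where "E_compact K" "\<And>x. x \<notin> K \<Longrightarrow> f x = 0"
proof -
  from assms obtain K where
    "E_compact K" "\<forall>x\<in>Espace - K. f x = 0" "\<forall>x. x \<notin> Espace \<longrightarrow> f x = 0"
    by (auto simp: CK_def)
  then show ?thesis by (intro that) auto
qed

lemma CK_I:
  assumes "continuous_on UNIV f" "E_compact K" "\<And>x. x \<notin> K \<Longrightarrow> f x = 0"
  shows "f \<in> CK"
  using assms continuous_on_subset[OF assms(1)] by (auto simp: CK_def E_compact_def Espace_def)

text \<open>A function in \<open>C\<^sub>K(E)\<close> vanishes on the open complement of its support, which contains
  the origin, so it is continuous on the whole cube.\<close>

lemma CK_continuous:
  assumes f: "f \<in> CK" shows "continuous_on UNIV f"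
proof -
  obtain K where K: "E_compact K" "\<And>x. x \<notin> K \<Longrightarrow> f x = 0"
    using CK_E[OF f] by blast
  have "continuous_on (- K) f"
    using continuous_on_cong[of "- K" "- K" f "\<lambda>_. 0"] K(2) by simp
  moreover have "continuous_on Espace f" "open (- K)" "Espace \<union> - K = UNIV"
    using f K(1) by (auto simp: CK_def E_compact_def Espace_def)
  ultimately show ?thesis
    using continuous_on_open_Un[OF open_Espace] by metis
qed

lemma CK_borel_measurable:
  assumes M: "radon M" and f: "f \<in> CK" shows "f \<in> borel_measurable M"
proof -
  have "f \<in> borel_measurable (restrict_space borel Espace)"
    by (intro measurable_restrict_space1 borel_measurable_continuous_onI CK_continuous f)
  moreover have
    "borel_measurable M = (borel_measurable (restrict_space borel Espace) :: (_ \<Rightarrow> real) set)"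
    using M by (intro measurable_cong_sets) (simp_all add: radon_def)
  ultimately show ?thesis
    by simp
qed

lemma CK_integrable:
  assumes M: "radon M" and f: "f \<in> CK" shows "integrable M f"
proof -
  obtain K where K: "E_compact K" "\<And>x. x \<notin> K \<Longrightarrow> f x = 0"
    using CK_E[OF f] by blast
  have "compact (f ` K)"
    using K(1) CK_continuous[OF f]
    by (intro compact_continuous_image closed_imp_compact_pt)
       (auto simp: E_compact_def intro: continuous_on_subset)
  then obtain B where B: "\<And>x. x \<in> K \<Longrightarrow> \<bar>f x\<bar> \<le> B"
    by (metis bounded_iff compact_imp_bounded image_eqI real_norm_def)
  have int_B: "integrable M (\<lambda>x. B * indicator K x :: real)"
    using M K(1) E_compact_in_sets_radon[OF M K(1)]
    by (intro integrable_mult_right integrable_real_indicator) (auto simp: radon_def)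
  have bound: "\<bar>f x\<bar> \<le> \<bar>B * indicator K x\<bar>" for x
    using B K(2) by (cases "x \<in> K") fastforce+
  show ?thesis
    by (rule Bochner_Integration.integrable_bound[OF int_B CK_borel_measurable[OF M f]])
       (simp add: bound)
qed

definition shell :: "nat \<Rightarrow> ('k::finite,'l::finite) pt set" where
  "shell i = {x. 1 / real (Suc i) \<le> norm (embed x)}"

lemma E_compact_shell: "E_compact (shell i)"
proof -
  have "closed (shell i)"
    unfolding shell_def
    by (intro closed_Collect_le continuous_on_const continuous_on_norm continuous_on_embed)
  then show ?thesis
    by (simp add: E_compact_def shell_def embed_eq_0_iff[of "(0, 0)", simplified])
qed

lemma UN_shell: "(\<Union>i. shell i) = Espace"
proof (intro equalityI subsetI)
  fix x :: "('k::finite,'l::finite) pt"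
  assume "x \<in> Espace"
  then have "norm (embed x) > 0"
    by (simp add: Espace_def embed_eq_0_iff)
  then obtain n where "n > 0" "inverse (real n) < norm (embed x)"
    using ex_inverse_of_nat_less by blast
  then have "x \<in> shell (n - 1)"
    by (simp add: shell_def inverse_eq_divide)
  then show "x \<in> (\<Union>i. shell i)" by blast
qed (use E_compact_shell E_compact_subset_Espace in blast)

text \<open>The trace on \<open>E\<close> of a closed set is the countable union of its intersections with the
  shells.\<close>

lemma sets_radon_eq_sigma_E_compact:
  fixes M :: "('k::finite,'l::finite) pt measure"
  assumes M: "radon M"
  shows "sets M = sigma_sets Espace (Collect E_compact)"
proof
  have "sets M = (\<inter>) Espace ` sigma_sets UNIV (Collect closed)"
    using M by (simp add: radon_def sets_restrict_space borel_eq_closed)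
  also have "\<dots> = sigma_sets Espace ((\<inter>) Espace ` Collect closed)"
    using borel_open[OF open_Espace] by (intro sigma_sets_Int) (auto simp: borel_eq_closed)
  also have "\<dots> \<subseteq> sigma_sets Espace (Collect E_compact)"
  proof (rule sigma_sets_mono, safe)
    fix C :: "('k::finite,'l::finite) pt set"
    assume "closed C"
    then have "C \<inter> shell i \<in> sigma_sets Espace (Collect E_compact)" for i
      using E_compact_shell[of i] by (intro sigma_sets.Basic) (auto simp: E_compact_def)
    moreover have "Espace \<inter> C = (\<Union>i. C \<inter> shell i)"
      using UN_shell by blast
    ultimately show "Espace \<inter> C \<in> sigma_sets Espace (Collect E_compact)"
      by (metis sigma_sets.Union)
  qed
  finally show "sets M \<subseteq> sigma_sets Espace (Collect E_compact)" .
  show "sigma_sets Espace (Collect E_compact) \<subseteq> sets M"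
    using sets.sigma_sets_subset[of "Collect E_compact" M] E_compact_in_sets_radon[OF M] M
    by (auto simp: radon_def)
qed

lemma integral_eq_of_dominated_limit:
  fixes f w :: "'a \<Rightarrow> real" and s :: "nat \<Rightarrow> 'a \<Rightarrow> real"
  assumes "f \<in> borel_measurable M" "f \<in> borel_measurable M'"
    and "\<And>i. s i \<in> borel_measurable M" "\<And>i. s i \<in> borel_measurable M'"
    and "integrable M w" "integrable M' w"
    and "\<And>x. (\<lambda>i. s i x) \<longlonglongrightarrow> f x" "\<And>i x. \<bar>s i x\<bar> \<le> w x"
    and eq: "\<And>i. (\<integral>x. s i x \<partial>M) = (\<integral>x. s i x \<partial>M')"
  shows "(\<integral>x. f x \<partial>M) = (\<integral>x. f x \<partial>M')"
proof (rule LIMSEQ_unique)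
  show "(\<lambda>i. \<integral>x. s i x \<partial>M) \<longlonglongrightarrow> (\<integral>x. f x \<partial>M)"
    by (rule integral_dominated_convergence[where w=w]) (use assms in auto)
  show "(\<lambda>i. \<integral>x. s i x \<partial>M) \<longlonglongrightarrow> (\<integral>x. f x \<partial>M')"
    unfolding eq by (rule integral_dominated_convergence[where w=w]) (use assms in auto)
qed

lemma fst_nonzero_in_sets_radon:
  fixes M :: "('k::finite,'l::finite) pt measure"
  assumes "radon M" shows "{x. fst x \<noteq> 0} \<in> sets M"
proof -
  have "{x :: ('k,'l) pt. fst x \<noteq> 0} = (- {0}) \<times> UNIV"
    by auto
  then have "open {x :: ('k,'l) pt. fst x \<noteq> 0}"
    by (metis open_Times open_Compl closed_zero_vec_ereal open_UNIV)
  then show ?thesis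
    using assms by (auto simp: sets_radon_iff Espace_def)
qed

definition cutoff :: "nat \<Rightarrow> ('k::finite,'l::finite) pt \<Rightarrow> real" where
  "cutoff n x = max 0 (min 1 (real (Suc n) * norm (fst (embed x)) - 1))"

lemma continuous_on_cutoff: "continuous_on UNIV (cutoff n)"
  unfolding cutoff_def by (intro continuous_intros continuous_on_compose2[OF continuous_on_embed]) auto

lemma cutoff_tendsto: "(\<lambda>n. cutoff n x) \<longlonglongrightarrow> indicator {x. fst x \<noteq> 0} x"
proof (cases "fst x = 0")
  case True
  then have "fst (embed x) = 0"
    by (simp add: fst_embed_eq_0_iff)
  then show ?thesis
    using True by (simp add: cutoff_def)
next
  case False
  then have a: "norm (fst (embed x)) > 0"
    by (simp add: fst_embed_eq_0_iff)
  obtain n0 :: nat where "2 / norm (fst (embed x)) < n0"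
    using reals_Archimedean2 by blast
  then have "2 < real n0 * norm (fst (embed x))"
    using a by (simp add: divide_less_eq)
  then have "cutoff n x = 1" if "n \<ge> n0" for n
    using that mult_right_mono[of "real n0" "real (Suc n)" "norm (fst (embed x))"]
    by (simp add: cutoff_def)
  then have "eventually (\<lambda>n. cutoff n x = 1) sequentially"
    by (auto simp: eventually_sequentially)
  then show ?thesis
    using False by (simp add: tendsto_eventually)
qed

lemma mult_cutoff_in_CK:
  assumes f: "f \<in> CK" shows "(\<lambda>x. f x * cutoff n x) \<in> CK"
proof -
  obtain K where "E_compact K" "\<And>x. x \<notin> K \<Longrightarrow> f x = 0"
    using CK_E[OF f] by blast
  then show ?thesis
    by (intro CK_I[where K=K] continuous_on_mult CK_continuous[OF f] continuous_on_cutoff) auto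
qed

text \<open>The cutoff vanishes where \<open>N y\<^sub>1 \<le> c / (n + 1)\<close>, with \<open>c\<close> from \<open>is_norm_lower_bound\<close>.\<close>

lemma mult_cutoff_in_F1:
  fixes N :: "real ^ 'k::finite \<Rightarrow> real"
  assumes N: "is_norm N" and f: "f \<in> CK"
  shows "(\<lambda>x. f x * cutoff n x) \<in> (F1 N :: (('k,'l::finite) pt \<Rightarrow> real) set)"
proof -
  obtain c where c: "c > 0" "\<And>x. c * norm x \<le> N x"
    using is_norm_lower_bound[OF N] by blast
  have "f (y1, y2) * cutoff n (y1, y2) = 0" if "ext_norm N y1 \<le> ereal (c / real (Suc n))" for y1 y2
  proof -
    have "c * norm (fst (embed (y1, y2))) \<le> c / real (Suc n)"
      using norm_squash_le_ext_norm[OF _ c(2) that] c(1) by (simp add: embed_def)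
    then have "c * (real (Suc n) * norm (fst (embed (y1, y2)))) \<le> c * 1"
      by (simp add: field_simps)
    then have "real (Suc n) * norm (fst (embed (y1, y2))) \<le> 1"
      using c(1) by (simp only: mult_le_cancel_left_pos)
    then show ?thesis
      by (simp add: cutoff_def)
  qed
  moreover have "c / real (Suc n) > 0"
    using c(1) by simp
  ultimately show ?thesis
    unfolding F1_def using mult_cutoff_in_CK[OF f] by blast
qed

lemma integral_mult_indicator_fst_nonzero_eq:
  fixes N :: "real ^ 'k::finite \<Rightarrow> real" and M M' :: "('k,'l::finite) pt measure"
  assumes N: "is_norm N" and M: "radon M" and M': "radon M'"
    and eq: "\<forall>g\<in>F1 N. (\<integral>x. g x \<partial>M) = (\<integral>x. g x \<partial>M')" and f: "f \<in> CK"
  shows "(\<integral>x. f x * indicator {x. fst x \<noteq> 0} x \<partial>M)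
       = (\<integral>x. f x * indicator {x. fst x \<noteq> 0} x \<partial>M')"
proof (rule integral_eq_of_dominated_limit[where s="\<lambda>n x. f x * cutoff n x" and w="\<lambda>x. \<bar>f x\<bar>"])
  show "(\<lambda>x. f x * indicator {x. fst x \<noteq> 0} x) \<in> borel_measurable M"
    "(\<lambda>x. f x * indicator {x. fst x \<noteq> 0} x) \<in> borel_measurable M'"
    using CK_borel_measurable[OF M f] CK_borel_measurable[OF M' f]
      fst_nonzero_in_sets_radon[OF M] fst_nonzero_in_sets_radon[OF M'] by measurable
  show "(\<lambda>x. f x * cutoff n x) \<in> borel_measurable M" "(\<lambda>x. f x * cutoff n x) \<in> borel_measurable M'" for n
    using CK_borel_measurable[OF M mult_cutoff_in_CK[OF f]]
      CK_borel_measurable[OF M' mult_cutoff_in_CK[OF f]] by auto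
  show "integrable M (\<lambda>x. \<bar>f x\<bar>)" "integrable M' (\<lambda>x. \<bar>f x\<bar>)"
    using CK_integrable[OF M f] CK_integrable[OF M' f] by auto
  show "(\<lambda>n. f x * cutoff n x) \<longlonglongrightarrow> f x * indicator {x. fst x \<noteq> 0} x" for x
    by (intro tendsto_mult tendsto_const cutoff_tendsto)
  show "\<bar>f x * cutoff n x\<bar> \<le> \<bar>f x\<bar>" for n x
    by (simp add: cutoff_def abs_mult mult_left_le)
  show "(\<integral>x. f x * cutoff n x \<partial>M) = (\<integral>x. f x * cutoff n x \<partial>M')" for n
    using eq mult_cutoff_in_F1[OF N f] by blast
qed

lemma fst_zero_section_in_F2:
  fixes f :: "('k::finite,'l::finite) pt \<Rightarrow> real"
  assumes f: "f \<in> CK" shows "(\<lambda>x :: ('k,'l) pt. f (0, snd x)) \<in> F2"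
proof -
  obtain K where K: "E_compact K" "\<And>x. x \<notin> K \<Longrightarrow> f x = 0"
    using CK_E[OF f] by blast
  define to_axis where "to_axis = (\<lambda>x :: ('k,'l) pt. (0 :: ereal ^ 'k, snd x))"
  have cont: "continuous_on UNIV to_axis"
    unfolding to_axis_def by (intro continuous_intros)
  have "E_compact (to_axis -` K)"
    using K(1) cont by (auto simp: E_compact_def to_axis_def intro: closed_vimage)
  moreover have "continuous_on UNIV (\<lambda>x. f (to_axis x))"
    by (rule continuous_on_compose2[OF CK_continuous[OF f] cont]) auto
  ultimately have "(\<lambda>x. f (to_axis x)) \<in> CK"
    using K(2) by (intro CK_I[where K="to_axis -` K"]) auto
  then show ?thesis
    by (simp add: F2_def to_axis_def)
qed

lemma integral_CK_eq:
  fixes N :: "real ^ 'k::finite \<Rightarrow> real" and M M' :: "('k,'l::finite) pt measure"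
  assumes N: "is_norm N" and M: "radon M" and M': "radon M'"
    and eq: "\<forall>g\<in>F1 N \<union> F2. (\<integral>x. g x \<partial>M) = (\<integral>x. g x \<partial>M')" and f: "f \<in> CK"
  shows "(\<integral>x. f x \<partial>M) = (\<integral>x. f x \<partial>M')"
proof -
  define A where "A = {x :: ('k,'l) pt. fst x \<noteq> 0}"
  define h where "h = (\<lambda>x :: ('k,'l) pt. f (0, snd x))"
  have h: "h \<in> F2" "h \<in> CK"
    using fst_zero_section_in_F2[OF f] by (simp_all add: F2_def h_def)
  have split: "f x = f x * indicator A x + (h x - h x * indicator A x)" for x
    by (cases "fst x = 0") (auto simp: A_def h_def prod_eq_iff intro: arg_cong[where f=f])
  have decompose: "(\<integral>x. f x \<partial>L)
      = (\<integral>x. f x * indicator A x \<partial>L) + ((\<integral>x. h x \<partial>L) - (\<integral>x. h x * indicator A x \<partial>L))"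
    if L: "radon L" for L
  proof -
    have "A \<in> sets L"
      unfolding A_def by (rule fst_nonzero_in_sets_radon[OF L])
    then have "integrable L (\<lambda>x. f x * indicator A x)" "integrable L h"
      "integrable L (\<lambda>x. h x * indicator A x)"
      using CK_integrable[OF L] f h(2) by (auto intro: integrable_real_mult_indicator)
    then show ?thesis
      by (subst split) simp
  qed
  have "(\<integral>x. g x * indicator A x \<partial>M) = (\<integral>x. g x * indicator A x \<partial>M')" if "g \<in> CK" for g
    unfolding A_def using eq that by (intro integral_mult_indicator_fst_nonzero_eq[OF N M M']) auto
  then show ?thesis
    unfolding decompose[OF M] decompose[OF M'] using f h eq by simp
qed

lemma infdist_embed_image_pos_iff:
  assumes "closed K" "K \<noteq> {}"
  shows "0 < infdist (embed x) (embed ` K) \<longleftrightarrow> x \<notin> K"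
proof -
  have "embed x \<in> embed ` K \<longleftrightarrow> x \<in> K"
    using inj_embed by (auto dest: injD)
  then show ?thesis
    using infdist_pos_not_in_closed[OF closed_embed_image[OF assms(1)], of "embed x"] assms(2)
      infdist_nonneg[of "embed x" "embed ` K"]
    by auto
qed

lemma tendsto_ramp:
  fixes a t :: real
  assumes "0 \<le> a" "0 \<le> t"
  shows "(\<lambda>n. max 0 (1 - (real n + a) * t)) \<longlonglongrightarrow> (if t = 0 then 1 else 0)"
proof (cases "t = 0")
  case False
  then have "t > 0"
    using assms(2) by simp
  obtain n0 :: nat where "1 / t < n0"
    using reals_Archimedean2 by blast
  then have "1 < real n0 * t"
    using \<open>t > 0\<close> by (simp add: divide_less_eq)
  have "max 0 (1 - (real n + a) * t) = 0" if "n \<ge> n0" for n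
  proof -
    have "real n0 * t \<le> (real n + a) * t"
      using that assms \<open>t > 0\<close> by (intro mult_right_mono add_increasing2) simp_all
    then show ?thesis
      using \<open>1 < real n0 * t\<close> by simp
  qed
  then have "eventually (\<lambda>n. max 0 (1 - (real n + a) * t) = 0) sequentially"
    by (auto simp: eventually_sequentially)
  then show ?thesis
    using False by (simp add: tendsto_eventually)
qed simp

text \<open>\<open>K\<^sub>0\<close> is a closed neighbourhood of \<open>K\<close> at positive distance from the origin, measured
  after the embedding into \<open>\<real>\<^sup>k\<^sup>+\<^sup>l\<close>.\<close>

lemma E_compact_indicator_approx:
  fixes K :: "('k::finite,'l::finite) pt set"
  assumes K: "E_compact K" and ne: "K \<noteq> {}"
  obtains K0 g where "E_compact K0" "\<And>n. g n \<in> CK" "\<And>n x. \<bar>g n x\<bar> \<le> indicator K0 x"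
    "\<And>x. (\<lambda>n. g n x) \<longlonglongrightarrow> indicator K x"
proof -
  define D where "D x = infdist (embed x) (embed ` K)" for x
  have D_pos: "0 < D x \<longleftrightarrow> x \<notin> K" for x
    unfolding D_def using K ne by (intro infdist_embed_image_pos_iff) (simp_all add: E_compact_def)
  have D_nonneg: "0 \<le> D x" for x
    by (simp add: D_def infdist_nonneg)
  define d where "d = D (0, 0)"
  have d: "d > 0"
    using D_pos K unfolding d_def E_compact_def by blast
  define K0 where "K0 = {x. D x \<le> d / 2}"
  define g where "g n x = max 0 (1 - (real n + 2 / d) * D x)" for n x
  have "closed K0"
    unfolding K0_def D_def by (intro closed_Collect_le continuous_intros continuous_on_embed)
  then have K0: "E_compact K0"
    using d by (simp add: K0_def E_compact_def d_def)
  have g_out: "g n x = 0" if "x \<notin> K0" for n x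
  proof -
    have "1 < (2 / d) * D x"
      using that d by (simp add: K0_def field_simps)
    also have "\<dots> \<le> (real n + 2 / d) * D x"
      using D_nonneg by (intro mult_right_mono) simp_all
    finally show ?thesis
      by (simp add: g_def)
  qed
  show ?thesis
  proof (rule that[OF K0])
    show "g n \<in> CK" for n
      unfolding g_def D_def using K0 g_out
      by (intro CK_I[where K=K0] continuous_intros continuous_on_embed) (auto simp: g_def D_def)
    show "\<bar>g n x\<bar> \<le> indicator K0 x" for n x
      using g_out[of x n] d D_nonneg[of x] by (auto simp: g_def indicator_def)
    show "(\<lambda>n. g n x) \<longlonglongrightarrow> indicator K x" for x
    proof -
      have "indicator K x = (if D x = 0 then 1 else 0 :: real)"
        using D_pos[of x] D_nonneg[of x] by (auto simp: indicator_def)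
      then show ?thesis
        using tendsto_ramp[of "2 / d" "D x"] d D_nonneg[of x] by (simp add: g_def)
    qed
  qed
qed

lemma emeasure_E_compact_eq:
  fixes M M' :: "('k::finite,'l::finite) pt measure"
  assumes M: "radon M" and M': "radon M'" and K: "E_compact K"
    and eq: "\<And>f. f \<in> CK \<Longrightarrow> (\<integral>x. f x \<partial>M) = (\<integral>x. f x \<partial>M')"
  shows "emeasure M K = emeasure M' K"
proof (cases "K = {}")
  case False
  obtain K0 g where K0: "E_compact K0" and g: "\<And>n. g n \<in> CK"
    "\<And>n x. \<bar>g n x\<bar> \<le> indicator K0 x" "\<And>x. (\<lambda>n. g n x) \<longlonglongrightarrow> indicator K x"
    by (metis E_compact_indicator_approx[OF K False])
  have "measure M K = measure M' K"
  proof -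
    have K_int: "integrable L (indicator K0 :: _ \<Rightarrow> real)" if L: "radon L" for L
      using E_compact_in_sets_radon[OF L K0] L K0
      by (intro integrable_real_indicator) (auto simp: radon_def)
    have "(\<integral>x. indicator K x \<partial>M) = (\<integral>x. (indicator K x :: real) \<partial>M')"
    proof (rule integral_eq_of_dominated_limit[where s=g and w="indicator K0"])
      show "(indicator K :: _ \<Rightarrow> real) \<in> borel_measurable M"
        "(indicator K :: _ \<Rightarrow> real) \<in> borel_measurable M'"
        using E_compact_in_sets_radon[OF M K] E_compact_in_sets_radon[OF M' K] by simp_all
      show "g n \<in> borel_measurable M" "g n \<in> borel_measurable M'" for n
        using CK_borel_measurable[OF M g(1)] CK_borel_measurable[OF M' g(1)] .
      show "integrable M (indicator K0 :: _ \<Rightarrow> real)"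
        "integrable M' (indicator K0 :: _ \<Rightarrow> real)"
        using K_int[OF M] K_int[OF M'] .
      show "\<And>n. (\<integral>x. g n x \<partial>M) = (\<integral>x. g n x \<partial>M')"
        using eq[OF g(1)] .
    qed (use g in auto)
    then show ?thesis
      using E_compact_subset_Espace[OF K] M M' by (simp add: radon_def Int_absorb2)
  qed
  moreover have "emeasure M K \<noteq> top" "emeasure M' K \<noteq> top"
    using M M' K by (auto simp: radon_def)
  ultimately show ?thesis
    by (simp add: emeasure_eq_ennreal_measure)
qed simp

theorem lemma3p1:
  fixes N1 :: "real ^ 'k::finite \<Rightarrow> real" and N2 :: "real ^ 'l::finite \<Rightarrow> real"
    and M M' :: "('k,'l) pt measure"
  assumes "is_norm N1" and "is_norm N2"
    and "radon M" and "radon M'"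
    and "\<forall>f \<in> F1 N1 \<union> F2. (\<integral>x. f x \<partial>M) = (\<integral>x. f x \<partial>M')"
  shows "M = M'"
proof (rule measure_eqI_generator_eq[where E="Collect E_compact" and \<Omega>=Espace and A=shell])
  show "Int_stable (Collect E_compact)"
    by (auto simp: Int_stable_def E_compact_def)
  show "Collect E_compact \<subseteq> Pow Espace"
    using E_compact_subset_Espace by auto
  show "emeasure M K = emeasure M' K" if "K \<in> Collect E_compact" for K
    by (rule emeasure_E_compact_eq[OF assms(3,4)])
       (use that integral_CK_eq[OF assms(1,3,4,5)] in auto)
  show "sets M = sigma_sets Espace (Collect E_compact)" "sets M' = sigma_sets Espace (Collect E_compact)"
    using sets_radon_eq_sigma_E_compact assms(3,4) by blast+
  show "range shell \<subseteq> Collect E_compact" "(\<Union>i. shell i) = Espace"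
    using E_compact_shell UN_shell by auto
  show "emeasure M (shell i) \<noteq> \<infinity>" for i
    using assms(3) E_compact_shell[of i] by (auto simp: radon_def)
qed

end
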